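(* For $\gamma\ge0$ let $P_1(\gamma),P_2(\gamma),\dots$ be i.i.d. Poisson random variables with parameter $\gamma$. Let $x\in\mathbb{R}$, $\delta>0$, $\lambda\ge0$, $\epsilon>0$, and set $\lambda^-_\epsilon=\max\{0,\lambda-\epsilon\}$, $\lambda^+_\epsilon=\lambda+\epsilon$. Then the following limit exists and $$\lim_{n\to\infty}\inf_{\gamma\in(\lambda-\epsilon,\lambda+\epsilon)\cap[0,\infty)}\frac1n\log\mathbb{P}\Big(\tfrac1n\textstyle\sum_{i=1}^nP_i(\gamma)\in(x-\delta,x+\delta)\Big)=\min_{\gamma\in\{\lambda^-_\epsilon,\lambda^+_\epsilon\}}\Big[-\inf_{a\in(x-\delta,x+\delta)}\ell(\gamma;a)\Big].$$
   Context: For $\gamma\ge0$: $\ell(\gamma;a)=\infty$ for $a<0$, $\ell(\gamma;0)=\gamma$, and $\ell(\gamma;a)=\gamma-a+a\log(a/\gamma)$ for $a>0$ (interpreted as $\infty$ when $\gamma=0$); this is the Fenchel–Legendre transform of the cumulant generating function of the Poisson($\gamma$) distribution. *)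

theory Defs
  imports "HOL-Probability.Probability"
begin

text \<open>Poisson distribution with parameter \<gamma> \<ge> 0 (the library's poisson_pmf
  is only specified for positive rate; rate 0 is the point mass at 0).\<close>
definition poisson :: "real \<Rightarrow> nat pmf" where
  "poisson \<gamma> = (if \<gamma> = 0 then return_pmf 0 else poisson_pmf \<gamma>)"

definition iid_poisson :: "real \<Rightarrow> nat \<Rightarrow> (nat \<Rightarrow> nat) pmf" where
  "iid_poisson \<gamma> n = Pi_pmf {1..n} 0 (\<lambda>_. poisson \<gamma>)"

definition ell :: "real \<Rightarrow> real \<Rightarrow> ereal" where
  "ell \<gamma> a = (if a < 0 then \<infinity>
              else if a = 0 then ereal \<gamma>
              else if \<gamma> = 0 then \<infinity>
              else ereal (\<gamma> - a + a * ln (a / \<gamma>)))"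

definition eln :: "real \<Rightarrow> ereal" where
  "eln p = (if p = 0 then -\<infinity> else ereal (ln p))"

end

theory Submission
  imports Defs
begin

text \<open>
  The sum of \<open>n\<close> independent Poisson(\<open>\<gamma>\<close>) variables is Poisson(\<open>n\<gamma>\<close>), so the probability
  is the Poisson(\<open>n\<gamma>\<close>) mass \<open>Q\<^sub>n(\<gamma>)\<close> of the integer interval \<open>K\<^sub>n = {k. k/n \<in> (x - \<delta>, x + \<delta>)}\<close>.
  The derivative of \<open>\<mu> \<mapsto> P(Poisson(\<mu>) \<in> [A, B])\<close> is \<open>p\<^sub>\<mu>(A - 1) - p\<^sub>\<mu>(B)\<close>, and
  \<open>p\<^sub>\<mu>(B) / p\<^sub>\<mu>(A - 1)\<close> increases with \<open>\<mu>\<close>, so the derivative changes sign at most once, from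
  \<open>+\<close> to \<open>-\<close>.  Thus \<open>Q\<^sub>n\<close> is quasi-concave and, being continuous, attains its infimum over the
  \<open>\<gamma>\<close>-interval at an endpoint.  It remains to show \<open>(1/n) log Q\<^sub>n(\<gamma>) \<rightarrow> - inf\<^sub>a \<ell>(\<gamma>;a)\<close>
  for fixed \<open>\<gamma>\<close>.  The bounds \<open>k log k - k \<le> log k! \<le> (k + 1) log (k + 1) - k\<close> give
  \<open>p\<^sub>n\<^sub>\<gamma>(k) \<le> exp (- n \<ell>(\<gamma>; k/n))\<close>, which with \<open>|K\<^sub>n| \<le> 2\<delta>n + 1\<close> yields the upper
  bound, and \<open>(1/n) log p\<^sub>n\<^sub>\<gamma>(\<lceil>na\<rceil>) \<rightarrow> - \<ell>(\<gamma>;a)\<close>, which yields the lower bound.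
\<close>

definition poisson_density :: "real \<Rightarrow> nat \<Rightarrow> real" where
  "poisson_density \<mu> k = exp (- \<mu>) * \<mu> ^ k / fact k"

lemma pmf_poisson_eq_density: "\<mu> \<ge> 0 \<Longrightarrow> pmf (poisson \<mu>) k = poisson_density \<mu> k"
  by (cases "\<mu> = 0") (auto simp: poisson_def poisson_density_def indicator_def)

lemma poisson_density_nonneg: "\<mu> \<ge> 0 \<Longrightarrow> poisson_density \<mu> k \<ge> 0"
  by (simp add: poisson_density_def)

lemma poisson_density_pos_iff: "\<mu> \<ge> 0 \<Longrightarrow> poisson_density \<mu> k > 0 \<longleftrightarrow> \<mu> > 0 \<or> k = 0"
  by (cases "\<mu> = 0"; cases k) (auto simp: poisson_density_def)

lemma poisson_density_le_1: "\<mu> \<ge> 0 \<Longrightarrow> poisson_density \<mu> k \<le> 1"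
  using pmf_le_1 pmf_poisson_eq_density by metis

lemma poisson_add:
  assumes "a \<ge> 0" "b \<ge> 0"
  shows "map_pmf (\<lambda>(i, j). i + j) (pair_pmf (poisson a) (poisson b)) = poisson (a + b)"
proof (rule pmf_eqI)
  fix k :: nat
  have preimage: "(\<lambda>(i, j). i + j) -` {k} = (\<lambda>j. (j, k - j)) ` {..k}"
    by (auto simp: image_iff)
  have inj: "inj_on (\<lambda>j. (j, k - j)) {..k}"
    by (auto simp: inj_on_def)
  have "pmf (map_pmf (\<lambda>(i, j). i + j) (pair_pmf (poisson a) (poisson b))) k
        = (\<Sum>j\<le>k. poisson_density a j * poisson_density b (k - j))"
    unfolding pmf_map preimage using assms
    by (subst measure_measure_pmf_finite)
       (auto simp: sum.reindex[OF inj] pmf_pair pmf_poisson_eq_density)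
  also have "\<dots> = (\<Sum>j\<le>k. exp (- (a + b)) / fact k * (of_nat (k choose j) * a ^ j * b ^ (k - j)))"
    by (intro sum.cong refl)
       (simp add: poisson_density_def binomial_fact exp_add field_simps exp_diff exp_minus_inverse)
  also have "\<dots> = exp (- (a + b)) / fact k * (a + b) ^ k"
    by (simp add: binomial_ring sum_distrib_left)
  also have "\<dots> = pmf (poisson (a + b)) k"
    using assms by (simp add: pmf_poisson_eq_density poisson_density_def)
  finally show "pmf (map_pmf (\<lambda>(i, j). i + j) (pair_pmf (poisson a) (poisson b))) k
      = pmf (poisson (a + b)) k" .
qed

lemma sum_iid_poisson:
  assumes "\<gamma> \<ge> 0"
  shows "map_pmf (\<lambda>P. \<Sum>i=1..n. P i) (iid_poisson \<gamma> n) = poisson (real n * \<gamma>)"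
proof (induction n)
  case 0
  then show ?case by (simp add: iid_poisson_def poisson_def)
next
  case (Suc n)
  have insert: "{1..Suc n} = insert (Suc n) {1..n}" by auto
  have "map_pmf (\<lambda>P. \<Sum>i=1..Suc n. P i) (iid_poisson \<gamma> (Suc n))
      = map_pmf (\<lambda>(i, j). i + j)
          (map_pmf (\<lambda>(y, P). (id y, \<Sum>i=1..n. P i)) (pair_pmf (poisson \<gamma>) (iid_poisson \<gamma> n)))"
    unfolding iid_poisson_def insert
    by (subst Pi_pmf_insert) (auto simp: map_pmf_comp case_prod_beta intro!: map_pmf_cong sum.cong)
  also have "\<dots> = poisson (\<gamma> + real n * \<gamma>)"
    unfolding map_pair Suc using assms by (simp add: poisson_add)
  finally show ?case by (simp add: algebra_simps)
qed

lemma has_real_derivative_poisson_density: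
  "((\<lambda>\<mu>. poisson_density \<mu> k) has_real_derivative
     (if k = 0 then 0 else poisson_density \<mu> (k - 1)) - poisson_density \<mu> k) (at \<mu>)"
proof (cases k)
  case (Suc j)
  have "((\<lambda>\<mu>. exp (- \<mu>) * \<mu> ^ Suc j / fact (Suc j)) has_real_derivative
      exp (- \<mu>) * \<mu> ^ j / fact j - exp (- \<mu>) * \<mu> ^ Suc j / fact (Suc j)) (at \<mu>)"
    by (rule derivative_eq_intros refl | simp add: fact_Suc field_simps del: of_nat_Suc)+
  then show ?thesis
    unfolding Suc poisson_density_def by simp
qed (auto simp: poisson_density_def intro!: derivative_eq_intros)

lemma has_real_derivative_poisson_lessThan:
  "((\<lambda>\<mu>. \<Sum>k<m. poisson_density \<mu> k) has_real_derivative
     (if m = 0 then 0 else - poisson_density \<mu> (m - 1))) (at \<mu>)"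
proof (induction m)
  case (Suc m)
  show ?case
    using DERIV_add[OF Suc has_real_derivative_poisson_density[of m]] by (cases "m = 0") simp_all
qed simp

lemma has_real_derivative_poisson_atLeastAtMost:
  assumes "A \<le> B"
  shows "((\<lambda>\<mu>. \<Sum>k\<in>{A..B}. poisson_density \<mu> k) has_real_derivative
     (if A = 0 then 0 else poisson_density \<mu> (A - 1)) - poisson_density \<mu> B) (at \<mu>)"
proof -
  have "(\<Sum>k\<in>{A..B}. poisson_density \<mu> k)
      = (\<Sum>k<Suc B. poisson_density \<mu> k) - (\<Sum>k<A. poisson_density \<mu> k)" for \<mu>
    using assms
    by (metis atLeastLessThanSuc_atLeastAtMost le_SucI lessThan_atLeast0 sum_diff_nat_ivl zero_le)
  then show ?thesis
    using DERIV_diff[OF has_real_derivative_poisson_lessThan[of "Suc B"]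
        has_real_derivative_poisson_lessThan[of A]]
    by (cases "A = 0") (simp_all del: lessThan_Suc sum.lessThan_Suc)
qed

lemma poisson_density_less_mono:
  assumes "j < m" "0 \<le> t" "t \<le> s" and less: "poisson_density t j < poisson_density t m"
  shows "poisson_density s j < poisson_density s m"
proof -
  define c where "c \<mu> = \<mu> ^ (m - j) * fact j / fact m" for \<mu> :: real
  have factor: "poisson_density \<mu> m = poisson_density \<mu> j * c \<mu>" for \<mu>
    using power_add[of \<mu> j "m - j"] \<open>j < m\<close> by (simp add: poisson_density_def c_def)
  have "poisson_density t j > 0"
    using less factor[of t] poisson_density_nonneg[OF \<open>0 \<le> t\<close>, of j]
    by (cases "poisson_density t j = 0") auto
  with less factor[of t] have "1 < c t"
    by (metis mult.right_neutral mult_less_cancel_left_pos)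
  then have "t > 0"
    using \<open>0 \<le> t\<close> \<open>j < m\<close> by (cases "t = 0") (auto simp: c_def power_0_left)
  have "c t \<le> c s"
    unfolding c_def using assms by (intro divide_right_mono mult_right_mono power_mono) auto
  moreover have "poisson_density s j > 0"
    using \<open>t > 0\<close> \<open>t \<le> s\<close> by (simp add: poisson_density_pos_iff)
  ultimately show ?thesis
    using \<open>1 < c t\<close> factor[of s] by simp
qed

lemma DERIV_stays_negative_imp_min_endpoints_le:
  fixes f f' :: "real \<Rightarrow> real"
  assumes deriv: "\<And>t. a \<le> t \<Longrightarrow> t \<le> b \<Longrightarrow> (f has_real_derivative f' t) (at t)"
    and stays_negative: "\<And>s t. a \<le> t \<Longrightarrow> t \<le> s \<Longrightarrow> s \<le> b \<Longrightarrow> f' t < 0 \<Longrightarrow> f' s < 0"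
    and "a \<le> \<mu>" "\<mu> \<le> b"
  shows "min (f a) (f b) \<le> f \<mu>"
proof (cases "\<forall>t. a \<le> t \<and> t \<le> \<mu> \<longrightarrow> 0 \<le> f' t")
  case True
  then have "f a \<le> f \<mu>"
    using deriv \<open>\<mu> \<le> b\<close> by (intro DERIV_nonneg_imp_nondecreasing[OF \<open>a \<le> \<mu>\<close>]) force
  then show ?thesis by simp
next
  case False
  then obtain t where "a \<le> t" "t \<le> \<mu>" "f' t < 0" by (auto simp: not_le)
  then have "f b \<le> f \<mu>"
    using deriv stays_negative \<open>a \<le> \<mu>\<close>
    by (intro DERIV_nonpos_imp_nonincreasing[OF \<open>\<mu> \<le> b\<close>])
       (metis less_imp_le order.trans)
  then show ?thesis by simp
qed

lemma poisson_atLeastAtMost_min_endpoints_le: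
  assumes "0 \<le> \<mu>\<^sub>1" "\<mu>\<^sub>1 \<le> \<mu>" "\<mu> \<le> \<mu>\<^sub>2"
  shows "min (\<Sum>k\<in>{A..B}. poisson_density \<mu>\<^sub>1 k) (\<Sum>k\<in>{A..B}. poisson_density \<mu>\<^sub>2 k)
         \<le> (\<Sum>k\<in>{A..B}. poisson_density \<mu> k)"
proof (cases "A \<le> B")
  case True
  define D where "D \<mu> = (if A = 0 then 0 else poisson_density \<mu> (A - 1)) - poisson_density \<mu> B"
    for \<mu>
  have deriv: "((\<lambda>\<mu>. \<Sum>k\<in>{A..B}. poisson_density \<mu> k) has_real_derivative D \<mu>) (at \<mu>)" for \<mu>
    unfolding D_def by (rule has_real_derivative_poisson_atLeastAtMost[OF True])
  have stays_negative: "D s < 0" if "\<mu>\<^sub>1 \<le> t" "t \<le> s" "D t < 0" for s t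
  proof (cases "A = 0")
    case True
    then show ?thesis
      using that assms poisson_density_pos_iff[of t B] poisson_density_pos_iff[of s B]
      by (auto simp: D_def)
  next
    case False
    then show ?thesis
      using that assms poisson_density_less_mono[of "A - 1" B t s] \<open>A \<le> B\<close>
      by (simp add: D_def)
  qed
  show ?thesis
    by (rule DERIV_stays_negative_imp_min_endpoints_le[OF deriv, of \<mu>\<^sub>1 \<mu>\<^sub>2])
       (use stays_negative assms in auto)
qed simp

definition sum_window :: "real \<Rightarrow> real \<Rightarrow> nat \<Rightarrow> nat set" where
  "sum_window x \<delta> n = {k. real k / real n \<in> {x - \<delta><..<x + \<delta>}}"

lemma finite_sum_window:
  assumes "n > 0"
  shows "finite (sum_window x \<delta> n)"
proof (rule finite_subset)
  show "sum_window x \<delta> n \<subseteq> {..nat \<lceil>real n * (x + \<delta>)\<rceil>}"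
  proof
    fix k assume "k \<in> sum_window x \<delta> n"
    then have "real k < real n * (x + \<delta>)"
      using assms by (simp add: sum_window_def divide_less_eq mult.commute)
    then show "k \<in> {..nat \<lceil>real n * (x + \<delta>)\<rceil>}"
      by (simp add: le_nat_iff) linarith
  qed
qed simp

lemma sum_window_eq_atLeastAtMost:
  assumes "n > 0"
  obtains A B where "sum_window x \<delta> n = {A..B}"
proof (cases "sum_window x \<delta> n = {}")
  case True
  then show ?thesis using that[of 1 0] by simp
next
  case False
  let ?K = "sum_window x \<delta> n"
  have fin: "finite ?K"
    using finite_sum_window[OF assms] .
  have "k \<in> ?K" if "Min ?K \<le> k" "k \<le> Max ?K" for k
  proof -
    have "real (Min ?K) / real n \<le> real k / real n" "real k / real n \<le> real (Max ?K) / real n"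
      using that by (simp_all add: divide_right_mono)
    moreover have "Min ?K \<in> ?K" "Max ?K \<in> ?K"
      using False fin by simp_all
    ultimately show ?thesis
      unfolding sum_window_def by auto
  qed
  moreover have "?K \<subseteq> {Min ?K..Max ?K}"
    using fin by auto
  ultimately have "?K = {Min ?K..Max ?K}"
    by auto
  then show ?thesis by (rule that)
qed

lemma card_sum_window_le:
  assumes "n > 0" "\<delta> > 0"
  shows "real (card (sum_window x \<delta> n)) \<le> 2 * \<delta> * real n + 1"
proof -
  obtain A B where K: "sum_window x \<delta> n = {A..B}"
    using sum_window_eq_atLeastAtMost[OF \<open>n > 0\<close>] .
  show ?thesis
  proof (cases "A \<le> B")
    case True
    then have "A \<in> sum_window x \<delta> n" "B \<in> sum_window x \<delta> n"
      unfolding K by auto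
    then have "real n * (x - \<delta>) < real A" "real B < real n * (x + \<delta>)"
      using \<open>n > 0\<close> by (auto simp: sum_window_def field_simps)
    moreover have "real (card {A..B}) = real B + 1 - real A"
      using True by (simp add: of_nat_diff)
    ultimately show ?thesis
      unfolding K by (simp add: algebra_simps)
  qed (use assms in \<open>simp add: K\<close>)
qed

definition window_prob :: "real \<Rightarrow> real \<Rightarrow> nat \<Rightarrow> real \<Rightarrow> real" where
  "window_prob x \<delta> n \<gamma> = (\<Sum>k\<in>sum_window x \<delta> n. poisson_density (real n * \<gamma>) k)"

lemma prob_iid_poisson_mean_in_window:
  assumes "\<gamma> \<ge> 0" "n > 0"
  shows "measure_pmf.prob (iid_poisson \<gamma> n)
            {P. (\<Sum>i=1..n. real (P i)) / real n \<in> {x - \<delta><..<x + \<delta>}}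
         = window_prob x \<delta> n \<gamma>"
proof -
  have "{P. (\<Sum>i=1..n. real (P i)) / real n \<in> {x - \<delta><..<x + \<delta>}}
        = (\<lambda>P. \<Sum>i=1..n. P i) -` sum_window x \<delta> n"
    by (auto simp: sum_window_def)
  then have "measure_pmf.prob (iid_poisson \<gamma> n)
            {P. (\<Sum>i=1..n. real (P i)) / real n \<in> {x - \<delta><..<x + \<delta>}}
      = measure (map_pmf (\<lambda>P. \<Sum>i=1..n. P i) (iid_poisson \<gamma> n)) (sum_window x \<delta> n)"
    by simp
  also have "\<dots> = window_prob x \<delta> n \<gamma>"
    unfolding sum_iid_poisson[OF \<open>\<gamma> \<ge> 0\<close>] window_prob_def
    using finite_sum_window[OF \<open>n > 0\<close>] assms
    by (simp add: measure_measure_pmf_finite pmf_poisson_eq_density)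
  finally show ?thesis .
qed

lemma window_prob_nonneg: "\<gamma> \<ge> 0 \<Longrightarrow> window_prob x \<delta> n \<gamma> \<ge> 0"
  unfolding window_prob_def by (intro sum_nonneg poisson_density_nonneg) auto

lemma window_prob_min_endpoints_le:
  assumes "n > 0" "0 \<le> \<gamma>\<^sub>1" "\<gamma>\<^sub>1 \<le> \<gamma>" "\<gamma> \<le> \<gamma>\<^sub>2"
  shows "min (window_prob x \<delta> n \<gamma>\<^sub>1) (window_prob x \<delta> n \<gamma>\<^sub>2) \<le> window_prob x \<delta> n \<gamma>"
proof -
  obtain A B where K: "sum_window x \<delta> n = {A..B}"
    using sum_window_eq_atLeastAtMost[OF \<open>n > 0\<close>] .
  have "0 \<le> real n * \<gamma>\<^sub>1" "real n * \<gamma>\<^sub>1 \<le> real n * \<gamma>" "real n * \<gamma> \<le> real n * \<gamma>\<^sub>2"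
    using assms by simp_all
  then show ?thesis
    unfolding window_prob_def K by (rule poisson_atLeastAtMost_min_endpoints_le)
qed

definition scaled_log_prob :: "real \<Rightarrow> real \<Rightarrow> nat \<Rightarrow> real \<Rightarrow> ereal" where
  "scaled_log_prob x \<delta> n \<gamma> = ereal (1 / real n) * eln (window_prob x \<delta> n \<gamma>)"

lemma eln_mono: "0 \<le> p \<Longrightarrow> p \<le> q \<Longrightarrow> eln p \<le> eln q"
  by (auto simp: eln_def)

lemma scaled_log_prob_mono:
  assumes "0 \<le> \<gamma>'" "window_prob x \<delta> n \<gamma>' \<le> window_prob x \<delta> n \<gamma>"
  shows "scaled_log_prob x \<delta> n \<gamma>' \<le> scaled_log_prob x \<delta> n \<gamma>"
  unfolding scaled_log_prob_def using assms window_prob_nonneg[OF \<open>0 \<le> \<gamma>'\<close>]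
  by (intro ereal_mult_left_mono eln_mono) auto

lemma tendsto_eln:
  assumes "(f \<longlongrightarrow> l) F" "\<forall>\<^sub>F y in F. 0 \<le> f y" "0 \<le> l"
  shows "((\<lambda>y. eln (f y)) \<longlongrightarrow> eln l) F"
proof (cases "l = 0")
  case False
  then have "\<forall>\<^sub>F y in F. eln (f y) = ereal (ln (f y))"
    using order_tendstoD(1)[OF assms(1), of 0] \<open>0 \<le> l\<close> by (auto simp: eln_def elim: eventually_mono)
  moreover have "((\<lambda>y. ereal (ln (f y))) \<longlongrightarrow> ereal (ln l)) F"
    using assms(1) False by (intro tendsto_intros)
  ultimately show ?thesis
    using False by (simp add: eln_def tendsto_cong)
next
  case True
  have "\<forall>\<^sub>F y in F. eln (f y) < ereal r" for r
  proof -
    have "\<forall>\<^sub>F y in F. f y < exp r"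
      using order_tendstoD(2)[OF assms(1)] True by simp
    with assms(2) show ?thesis
      by eventually_elim (auto simp: eln_def ln_less_cancel_iff[of _ "exp r", simplified])
  qed
  then show ?thesis
    using True by (simp add: eln_def tendsto_MInfty)
qed

lemma continuous_on_eln: "continuous_on {0..} eln"
  unfolding continuous_on_def
  by (auto intro!: tendsto_eln[where f = "\<lambda>x. x"] tendsto_ident_at simp: eventually_at_filter)

lemma continuous_on_scaled_log_prob: "continuous_on {0..} (scaled_log_prob x \<delta> n)"
  unfolding scaled_log_prob_def
proof (intro continuous_on_cmult_ereal continuous_on_compose2[OF continuous_on_eln])
  show "continuous_on {0..} (window_prob x \<delta> n)"
    unfolding window_prob_def poisson_density_def by (intro continuous_intros) auto
qed (auto simp: window_prob_nonneg)

lemma INF_eq_min_endpoints: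
  fixes h :: "real \<Rightarrow> 'b::{complete_linorder, linorder_topology}"
  assumes "S \<subseteq> {a..b}" "a \<in> closure S" "b \<in> closure S"
    and "continuous_on {a..b} h"
    and "\<And>t. t \<in> {a..b} \<Longrightarrow> min (h a) (h b) \<le> h t"
  shows "(INF t\<in>S. h t) = min (h a) (h b)"
proof (rule antisym)
  have "(INF t\<in>S. h t) \<le> h c" if "c \<in> closure S" for c
  proof -
    obtain u where u: "\<And>j. u j \<in> S" "u \<longlonglongrightarrow> c"
      using \<open>c \<in> closure S\<close> by (auto simp: closure_sequential)
    have "c \<in> {a..b}"
      using closure_mono[OF \<open>S \<subseteq> {a..b}\<close>] that by auto
    moreover have "\<forall>j. u j \<in> {a..b}"
      using u(1) \<open>S \<subseteq> {a..b}\<close> by blast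
    ultimately have "(\<lambda>j. h (u j)) \<longlonglongrightarrow> h c"
      using u(2) by (intro continuous_on_tendsto_compose[OF \<open>continuous_on {a..b} h\<close>] always_eventually)
    moreover have "\<forall>j. (INF t\<in>S. h t) \<le> h (u j)"
      using u(1) by (simp add: INF_lower)
    ultimately show ?thesis
      by (intro tendsto_lowerbound) auto
  qed
  then show "(INF t\<in>S. h t) \<le> min (h a) (h b)"
    using assms(2,3) by simp
  have "min (h a) (h b) \<le> h t" if "t \<in> S" for t
    using that assms(1,5) by blast
  then show "min (h a) (h b) \<le> (INF t\<in>S. h t)"
    by (rule INF_greatest)
qed

lemma INF_scaled_log_prob:
  assumes "n > 0" "lam \<ge> 0" "\<epsilon> > 0"
  shows "(INF \<gamma>\<in>{lam - \<epsilon><..<lam + \<epsilon>} \<inter> {0..}. scaled_log_prob x \<delta> n \<gamma>)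
         = min (scaled_log_prob x \<delta> n (max 0 (lam - \<epsilon>))) (scaled_log_prob x \<delta> n (lam + \<epsilon>))"
proof (rule INF_eq_min_endpoints)
  let ?a = "max 0 (lam - \<epsilon>)" and ?b = "lam + \<epsilon>"
  have "{?a..?b} = closure {?a<..<?b}"
    using assms by simp
  also have "\<dots> \<subseteq> closure ({lam - \<epsilon><..<lam + \<epsilon>} \<inter> {0..})"
    by (intro closure_mono) auto
  finally show "?a \<in> closure ({lam - \<epsilon><..<lam + \<epsilon>} \<inter> {0..})"
    "?b \<in> closure ({lam - \<epsilon><..<lam + \<epsilon>} \<inter> {0..})"
    using assms by auto
  show "continuous_on {?a..?b} (scaled_log_prob x \<delta> n)"
    by (rule continuous_on_subset[OF continuous_on_scaled_log_prob]) auto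
  show "min (scaled_log_prob x \<delta> n ?a) (scaled_log_prob x \<delta> n ?b) \<le> scaled_log_prob x \<delta> n t"
    if "t \<in> {?a..?b}" for t
    using window_prob_min_endpoints_le[OF \<open>n > 0\<close>, of ?a t ?b x \<delta>] that
      scaled_log_prob_mono[of ?a x \<delta> n t] scaled_log_prob_mono[of ?b x \<delta> n t]
    by (auto simp: min_def split: if_splits)
qed auto

definition poisson_rate :: "real \<Rightarrow> real \<Rightarrow> real" where
  "poisson_rate \<gamma> a = \<gamma> - a + a * ln (a / \<gamma>)"

lemma ell_eq_poisson_rate: "\<gamma> > 0 \<Longrightarrow> a \<ge> 0 \<Longrightarrow> ell \<gamma> a = ereal (poisson_rate \<gamma> a)"
  by (auto simp: ell_def poisson_rate_def)

lemma poisson_rate_scale: "c > 0 \<Longrightarrow> poisson_rate (c * \<gamma>) (c * a) = c * poisson_rate \<gamma> a"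
  by (simp add: poisson_rate_def algebra_simps)

lemma ln_poisson_density: "\<mu> > 0 \<Longrightarrow> ln (poisson_density \<mu> k) = - \<mu> + real k * ln \<mu> - ln (fact k)"
  by (simp add: poisson_density_def ln_div ln_mult ln_realpow)

lemma ln_fact_ge: "real k * ln (real k) - real k \<le> ln (fact k)"
  \<comment> \<open>\<open>k\<^sup>k e\<^sup>-\<^sup>k / k!\<close> is the Poisson(\<open>k\<close>) weight of \<open>k\<close>, hence at most 1.\<close>
proof (cases "k = 0")
  case False
  then have "ln (poisson_density (real k) k) \<le> 0"
    using poisson_density_le_1[of "real k" k] poisson_density_pos_iff[of "real k" k] by simp
  then show ?thesis
    using False by (simp add: ln_poisson_density)
qed simp

lemma ln_fact_le: "ln (fact k) \<le> (real k + 1) * ln (real k + 1) - real k"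
proof (induction k)
  case 0 then show ?case by simp
next
  case (Suc k)
  have k1: "real k + 1 > 0" "real k + 2 > 0" by auto
  have "ln ((real k + 1) / (real k + 2)) \<le> (real k + 1) / (real k + 2) - 1"
    by (rule ln_le_minus_one) (use k1 in auto)
  also have "\<dots> = - 1 / (real k + 2)" using k1 by (simp add: field_simps)
  finally have "ln (real k + 1) - ln (real k + 2) \<le> - 1 / (real k + 2)"
    using k1 by (simp add: ln_div)
  then have "(real k + 2) * (ln (real k + 1) - ln (real k + 2)) \<le> -1"
    using k1 by (simp add: field_simps)
  then have key: "(real k + 2) * ln (real k + 1) + 1 \<le> (real k + 2) * ln (real k + 2)"
    by (simp add: algebra_simps)
  have "ln (fact (Suc k)) = ln (real k + 1) + ln (fact k)"
    by (simp add: ln_mult add.commute)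
  also have "\<dots> \<le> ln (real k + 1) + ((real k + 1) * ln (real k + 1) - real k)"
    using Suc by simp
  also have "\<dots> \<le> (real k + 2) * ln (real k + 2) - (real k + 1)"
    using key by (simp add: algebra_simps)
  finally show ?case by (simp add: add.commute)
qed

lemma ln_poisson_density_le:
  assumes "\<mu> > 0"
  shows "ln (poisson_density \<mu> k) \<le> - poisson_rate \<mu> (real k)"
proof (cases "k = 0")
  case False
  have "ln (poisson_density \<mu> k) \<le> - \<mu> + real k * ln \<mu> - (real k * ln (real k) - real k)"
    using ln_fact_ge[of k] assms by (simp add: ln_poisson_density)
  also have "\<dots> = - poisson_rate \<mu> (real k)"
    using False assms by (simp add: poisson_rate_def ln_div algebra_simps)
  finally show ?thesis .
qed (use assms in \<open>simp add: ln_poisson_density poisson_rate_def\<close>)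

lemma ln_poisson_density_scaled_le:
  assumes "n > 0" "\<gamma> > 0"
  shows "ln (poisson_density (real n * \<gamma>) k) / real n \<le> - poisson_rate \<gamma> (real k / real n)"
proof -
  have "ln (poisson_density (real n * \<gamma>) k) \<le> - (real n * poisson_rate \<gamma> (real k / real n))"
    using ln_poisson_density_le[of "real n * \<gamma>" k] poisson_rate_scale[of "real n" \<gamma> "real k / real n"] assms
    by simp
  then show ?thesis
    using assms by (simp add: divide_le_eq mult.commute)
qed

lemma ln_poisson_density_scaled_ge:
  fixes n k :: nat
  assumes "n > 0" "\<gamma> > 0"
  defines "b \<equiv> real k / real n" and "c \<equiv> (real k + 1) / real n"
  shows "- \<gamma> + b * ln \<gamma> - c * ln c - ln (real n) / real n + b
         \<le> ln (poisson_density (real n * \<gamma>) k) / real n"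
proof -
  have n: "real n > 0" "c > 0"
    using assms(1) by (simp_all add: c_def add_nonneg_pos)
  have nb: "real n * b = real k" and nc: "real n * c = real n * b + 1"
    using n by (simp_all add: b_def c_def)
  have "real n * (c * ln c) = (real n * b + 1) * ln c"
    using nc by (metis mult.assoc)
  then have "real n * (- \<gamma> + b * ln \<gamma> - c * ln c - ln (real n) / real n + b)
      = - (real n * \<gamma>) + (real n * b) * (ln (real n) + ln \<gamma>)
        - ((real n * b + 1) * (ln (real n) + ln c) - real n * b)"
    using n by (simp add: algebra_simps)
  also have "\<dots> = - (real n * \<gamma>) + real k * ln (real n * \<gamma>)
      - ((real k + 1) * ln (real k + 1) - real k)"
  proof -
    have "ln (real k + 1) = ln (real n * c)"
      using nb nc by simp
    then show ?thesis
      using n assms(2) by (simp add: nb ln_mult)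
  qed
  also have "\<dots> \<le> ln (poisson_density (real n * \<gamma>) k)"
    using ln_fact_le[of k] n assms(2) by (simp add: ln_poisson_density)
  finally show ?thesis
    using n by (simp add: le_divide_eq mult.commute)
qed

lemma tendsto_ln_poisson_density:
  assumes "\<gamma> > 0" "a > 0" and lim: "(\<lambda>n. real (k n) / real n) \<longlonglongrightarrow> a"
  shows "(\<lambda>n. ln (poisson_density (real n * \<gamma>) (k n)) / real n) \<longlonglongrightarrow> - poisson_rate \<gamma> a"
proof (rule tendsto_sandwich)
  define b where "b = (\<lambda>n. real (k n) / real n)"
  define c where "c = (\<lambda>n. (real (k n) + 1) / real n)"
  have "b \<longlonglongrightarrow> a"
    using lim by (simp add: b_def)
  moreover have "c = (\<lambda>n. b n + 1 / real n)"
    by (simp add: b_def c_def add_divide_distrib)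
  ultimately have "c \<longlonglongrightarrow> a + 0"
    by (simp only:) (intro tendsto_add lim_1_over_n)
  then have "(\<lambda>n. - \<gamma> + b n * ln \<gamma> - c n * ln (c n) - ln (real n) / real n + b n)
      \<longlonglongrightarrow> - \<gamma> + a * ln \<gamma> - (a + 0) * ln (a + 0) - 0 + a"
    using \<open>b \<longlonglongrightarrow> a\<close> \<open>a > 0\<close> by (intro tendsto_intros lim_ln_over_n) auto
  then show "(\<lambda>n. - \<gamma> + b n * ln \<gamma> - c n * ln (c n) - ln (real n) / real n + b n)
      \<longlonglongrightarrow> - poisson_rate \<gamma> a"
    using assms(1,2) by (simp add: poisson_rate_def ln_div algebra_simps)
  have "(\<lambda>n. - (\<gamma> - b n + b n * ln (b n / \<gamma>))) \<longlonglongrightarrow> - (\<gamma> - a + a * ln (a / \<gamma>))"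
    using \<open>b \<longlonglongrightarrow> a\<close> assms(1,2) by (intro tendsto_intros) auto
  then show "(\<lambda>n. - poisson_rate \<gamma> (b n)) \<longlonglongrightarrow> - poisson_rate \<gamma> a"
    by (simp add: poisson_rate_def)
  show "\<forall>\<^sub>F n in sequentially. ln (poisson_density (real n * \<gamma>) (k n)) / real n \<le> - poisson_rate \<gamma> (b n)"
    using eventually_gt_at_top[of 0]
    by eventually_elim (simp add: b_def ln_poisson_density_scaled_le assms(1))
  show "\<forall>\<^sub>F n in sequentially. - \<gamma> + b n * ln \<gamma> - c n * ln (c n) - ln (real n) / real n + b n
      \<le> ln (poisson_density (real n * \<gamma>) (k n)) / real n"
    using eventually_gt_at_top[of 0] unfolding b_def c_def
    by eventually_elim (rule ln_poisson_density_scaled_ge[OF _ assms(1)])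
qed

lemma tendsto_ceiling_mult_div:
  assumes "a \<ge> 0"
  shows "(\<lambda>n. real (nat \<lceil>real n * a\<rceil>) / real n) \<longlonglongrightarrow> a"
proof (rule tendsto_sandwich)
  show "\<forall>\<^sub>F n in sequentially. a \<le> real (nat \<lceil>real n * a\<rceil>) / real n"
    using eventually_gt_at_top[of 0]
    by eventually_elim (use assms in \<open>auto simp: le_divide_eq mult.commute intro: le_of_int_ceiling\<close>)
  show "\<forall>\<^sub>F n in sequentially. real (nat \<lceil>real n * a\<rceil>) / real n \<le> a + 1 / real n"
    using eventually_gt_at_top[of 0]
    by eventually_elim
       (use assms of_int_ceiling_le_add_one[of "real _ * a"] in \<open>auto simp: divide_le_eq algebra_simps\<close>)
  show "(\<lambda>n. a + 1 / real n) \<longlonglongrightarrow> a"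
    using tendsto_add[OF tendsto_const lim_1_over_n, of a] by simp
qed simp

lemma scaled_log_prob_ge:
  assumes "n > 0" "\<gamma> > 0" "k \<in> sum_window x \<delta> n"
  shows "ereal (ln (poisson_density (real n * \<gamma>) k) / real n) \<le> scaled_log_prob x \<delta> n \<gamma>"
proof -
  have pos: "poisson_density (real n * \<gamma>) k > 0"
    using assms by (simp add: poisson_density_pos_iff)
  moreover have "poisson_density (real n * \<gamma>) k \<le> window_prob x \<delta> n \<gamma>"
    unfolding window_prob_def using finite_sum_window[OF \<open>n > 0\<close>] assms
    by (intro member_le_sum poisson_density_nonneg) auto
  ultimately have "ln (poisson_density (real n * \<gamma>) k) / real n \<le> ln (window_prob x \<delta> n \<gamma>) / real n"
    by (intro divide_right_mono) auto
  then show ?thesis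
    using pos \<open>poisson_density (real n * \<gamma>) k \<le> window_prob x \<delta> n \<gamma>\<close>
    by (simp add: scaled_log_prob_def eln_def)
qed

lemma window_prob_le:
  assumes "n > 0" "\<gamma> > 0" "\<delta> > 0"
    and rate: "\<And>k. k \<in> sum_window x \<delta> n \<Longrightarrow> L \<le> poisson_rate \<gamma> (real k / real n)"
  shows "window_prob x \<delta> n \<gamma> \<le> (2 * \<delta> * real n + 1) * exp (- (real n * L))"
proof -
  have "window_prob x \<delta> n \<gamma> \<le> (\<Sum>k\<in>sum_window x \<delta> n. exp (- (real n * L)))"
    unfolding window_prob_def
  proof (rule sum_mono)
    fix k assume "k \<in> sum_window x \<delta> n"
    then have "ln (poisson_density (real n * \<gamma>) k) / real n \<le> - L"
      using ln_poisson_density_scaled_le[OF assms(1,2), of k] rate[of k] by linarith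
    then have "ln (poisson_density (real n * \<gamma>) k) \<le> - (real n * L)"
      using assms(1) by (simp add: divide_le_eq mult.commute)
    moreover have "poisson_density (real n * \<gamma>) k > 0"
      using assms(1,2) by (simp add: poisson_density_pos_iff)
    ultimately show "poisson_density (real n * \<gamma>) k \<le> exp (- (real n * L))"
      by (metis exp_le_cancel_iff exp_ln)
  qed
  also have "\<dots> \<le> (2 * \<delta> * real n + 1) * exp (- (real n * L))"
    using card_sum_window_le[OF assms(1,3)] by simp
  finally show ?thesis .
qed

lemma scaled_log_prob_le:
  assumes "n > 0" "\<gamma> > 0" "\<delta> > 0"
    and "\<And>k. k \<in> sum_window x \<delta> n \<Longrightarrow> L \<le> poisson_rate \<gamma> (real k / real n)"
  shows "scaled_log_prob x \<delta> n \<gamma> \<le> ereal (ln (2 * \<delta> * real n + 1) / real n - L)"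
proof (cases "window_prob x \<delta> n \<gamma> = 0")
  case False
  then have pos: "window_prob x \<delta> n \<gamma> > 0"
    using window_prob_nonneg[of \<gamma>] assms(2) by (simp add: order_less_le)
  have "2 * \<delta> * real n + 1 > 0"
    using assms(3) by (simp add: add_nonneg_pos)
  then have "ln (window_prob x \<delta> n \<gamma>) \<le> ln ((2 * \<delta> * real n + 1) * exp (- (real n * L)))"
    using pos window_prob_le[OF assms] by simp
  also have "\<dots> = ln (2 * \<delta> * real n + 1) - real n * L"
    using \<open>2 * \<delta> * real n + 1 > 0\<close> by (simp add: ln_mult)
  finally have "ln (window_prob x \<delta> n \<gamma>) / real n \<le> (ln (2 * \<delta> * real n + 1) - real n * L) / real n"
    by (simp add: divide_right_mono)
  also have "\<dots> = ln (2 * \<delta> * real n + 1) / real n - L"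
    using assms(1) by (simp add: diff_divide_distrib)
  finally show ?thesis
    using pos by (simp add: scaled_log_prob_def eln_def)
qed (use assms(1) in \<open>simp add: scaled_log_prob_def eln_def\<close>)

lemma tendsto_ln_linear_div:
  assumes "c > 0"
  shows "(\<lambda>n. ln (c * real n + 1) / real n) \<longlonglongrightarrow> 0"
proof -
  have "\<forall>\<^sub>F n in sequentially. ln (real n) / real n + ln (c + 1 / real n) * (1 / real n)
      = ln (c * real n + 1) / real n"
  proof (rule eventually_sequentiallyI[of 1])
    fix n :: nat assume "1 \<le> n"
    then have "c * real n + 1 = real n * (c + 1 / real n)"
      by (simp add: field_simps)
    moreover have "c + 1 / real n > 0"
      using assms by (simp add: add_pos_nonneg)
    ultimately show "ln (real n) / real n + ln (c + 1 / real n) * (1 / real n) = ln (c * real n + 1) / real n"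
      using \<open>1 \<le> n\<close> by (simp add: ln_mult add_divide_distrib)
  qed
  moreover have "(\<lambda>n. ln (real n) / real n + ln (c + 1 / real n) * (1 / real n))
      \<longlonglongrightarrow> 0 + ln (c + 0) * 0"
    using assms by (intro tendsto_intros lim_ln_over_n) auto
  ultimately show ?thesis
    by (simp add: Lim_transform_eventually)
qed

lemma eventually_mem_sum_window:
  assumes "(\<lambda>n. real (k n) / real n) \<longlonglongrightarrow> a" "a \<in> {x - \<delta><..<x + \<delta>}"
  shows "\<forall>\<^sub>F n in sequentially. k n \<in> sum_window x \<delta> n"
proof -
  have "\<forall>\<^sub>F n in sequentially. x - \<delta> < real (k n) / real n \<and> real (k n) / real n < x + \<delta>"
    using assms(2) by (intro eventually_conj order_tendstoD[OF assms(1)]) auto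
  then show ?thesis
    unfolding sum_window_def by simp
qed

lemma scaled_log_prob_eventually_gt:
  assumes "\<gamma> > 0" "y < - (INF a\<in>{x - \<delta><..<x + \<delta>}. ell \<gamma> a)"
  shows "\<forall>\<^sub>F n in sequentially. y < scaled_log_prob x \<delta> n \<gamma>"
proof -
  have "y < (SUP a\<in>{x - \<delta><..<x + \<delta>}. - ell \<gamma> a)"
    using assms(2) by (simp add: ereal_SUP_uminus_eq)
  then obtain a where a: "a \<in> {x - \<delta><..<x + \<delta>}" and "y < - ell \<gamma> a"
    by (auto simp: less_SUP_iff)
  then have "a \<ge> 0"
    by (cases "a \<ge> 0") (auto simp: ell_def)
  then have y: "y < ereal (- poisson_rate \<gamma> a)"
    using \<open>y < - ell \<gamma> a\<close> assms(1) by (simp add: ell_eq_poisson_rate)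
  define k where "k n = nat \<lceil>real n * a\<rceil>" for n
  have lim: "(\<lambda>n. real (k n) / real n) \<longlonglongrightarrow> a"
    unfolding k_def by (rule tendsto_ceiling_mult_div[OF \<open>a \<ge> 0\<close>])
  have window: "\<forall>\<^sub>F n in sequentially. k n \<in> sum_window x \<delta> n"
    using eventually_mem_sum_window[OF lim a] .
  have "(\<lambda>n. ln (poisson_density (real n * \<gamma>) (k n)) / real n) \<longlonglongrightarrow> - poisson_rate \<gamma> a"
  proof (cases "a = 0")
    case True
    have "\<forall>\<^sub>F n in sequentially. ln (poisson_density (real n * \<gamma>) (k n)) / real n = - poisson_rate \<gamma> a"
      using eventually_gt_at_top[of "0::nat"]
      by eventually_elim (simp add: True k_def poisson_rate_def poisson_density_def)
    then show ?thesis
      by (rule tendsto_eventually)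
  next
    case False
    then show ?thesis
      using assms(1) \<open>a \<ge> 0\<close> lim by (intro tendsto_ln_poisson_density) auto
  qed
  then have "\<forall>\<^sub>F n in sequentially. y < ereal (ln (poisson_density (real n * \<gamma>) (k n)) / real n)"
    using y by (intro order_tendstoD(1)) auto
  with window eventually_gt_at_top[of "0::nat"] show ?thesis
    by eventually_elim (meson assms(1) less_le_trans scaled_log_prob_ge)
qed

lemma scaled_log_prob_eventually_lt:
  assumes "\<gamma> > 0" "\<delta> > 0" "- (INF a\<in>{x - \<delta><..<x + \<delta>}. ell \<gamma> a) < y"
  shows "\<forall>\<^sub>F n in sequentially. scaled_log_prob x \<delta> n \<gamma> < y"
proof -
  define L where "L = (INF a\<in>{x - \<delta><..<x + \<delta>}. ell \<gamma> a)"
  have L_le: "L \<le> ereal (poisson_rate \<gamma> (real k / real n))" if "k \<in> sum_window x \<delta> n" for k n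
    using that INF_lower[of "real k / real n" "{x - \<delta><..<x + \<delta>}" "ell \<gamma>"] assms(1)
    by (auto simp: L_def sum_window_def ell_eq_poisson_rate)
  show ?thesis
  proof (cases L)
    case (real l)
    have "(\<lambda>n. ereal (ln (2 * \<delta> * real n + 1) / real n - l)) \<longlonglongrightarrow> ereal (0 - l)"
      using tendsto_ln_linear_div[of "2 * \<delta>"] assms(2) by (intro tendsto_intros) auto
    moreover have "ereal (0 - l) < y"
      using assms(3) real by (simp add: L_def)
    ultimately have "\<forall>\<^sub>F n in sequentially. ereal (ln (2 * \<delta> * real n + 1) / real n - l) < y"
      by (rule order_tendstoD(2))
    then show ?thesis
    proof (rule eventually_elim2[OF _ eventually_gt_at_top[of "0::nat"]])
      fix n :: nat assume "ereal (ln (2 * \<delta> * real n + 1) / real n - l) < y" "n > 0"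
      moreover have "scaled_log_prob x \<delta> n \<gamma> \<le> ereal (ln (2 * \<delta> * real n + 1) / real n - l)"
        using L_le real assms(1,2) \<open>n > 0\<close> by (intro scaled_log_prob_le) auto
      ultimately show "scaled_log_prob x \<delta> n \<gamma> < y"
        by simp
    qed
  next
    case PInf
    then have "sum_window x \<delta> n = {}" for n
      using L_le by fastforce
    then have "scaled_log_prob x \<delta> n \<gamma> < y" if "n > 0" for n
      using that assms(3) PInf by (simp add: scaled_log_prob_def window_prob_def eln_def L_def)
    then show ?thesis
      using eventually_gt_at_top[of "0::nat"] by (rule eventually_mono[rotated])
  next
    case MInf
    then show ?thesis
      using assms(3) by (simp add: L_def)
  qed
qed

lemma tendsto_scaled_log_prob:
  assumes "\<gamma> \<ge> 0" "\<delta> > 0"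
  shows "(\<lambda>n. scaled_log_prob x \<delta> n \<gamma>) \<longlonglongrightarrow> - (INF a\<in>{x - \<delta><..<x + \<delta>}. ell \<gamma> a)"
proof (cases "\<gamma> = 0")
  case False
  then show ?thesis
    using assms
    by (intro order_tendstoI scaled_log_prob_eventually_gt scaled_log_prob_eventually_lt) auto
next
  case True
  define I where "I = {x - \<delta><..<x + \<delta>}"
  have ell_0: "ell 0 a = (if a = 0 then 0 else \<infinity>)" for a
    by (simp add: ell_def zero_ereal_def)
  have INF: "(INF a\<in>I. ell 0 a) = (if 0 \<in> I then 0 else \<infinity>)"
  proof (cases "0 \<in> I")
    case True
    then show ?thesis
      by (auto simp: ell_0 intro!: antisym INF_lower2[OF True] INF_greatest)
  next
    case False
    moreover have "x \<in> I"
      using assms(2) by (simp add: I_def)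
    ultimately show ?thesis
      by (auto simp: ell_0 intro!: INF_eq_const)
  qed
  have "window_prob x \<delta> n 0 = (if 0 \<in> I then 1 else 0)" if "n > 0" for n
  proof -
    have "window_prob x \<delta> n 0 = (\<Sum>k\<in>sum_window x \<delta> n. if k = 0 then 1 else 0)"
      unfolding window_prob_def by (intro sum.cong) (auto simp: poisson_density_def)
    then show ?thesis
      using finite_sum_window[OF that] by (simp add: I_def sum_window_def)
  qed
  then have "scaled_log_prob x \<delta> n 0 = - (INF a\<in>I. ell 0 a)" if "n > 0" for n
    using that by (simp add: INF scaled_log_prob_def eln_def)
  then have "\<forall>\<^sub>F n in sequentially. scaled_log_prob x \<delta> n 0 = - (INF a\<in>I. ell 0 a)"
    using eventually_gt_at_top[of "0::nat"] by (rule eventually_mono[rotated])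
  then show ?thesis
    using True by (simp add: I_def tendsto_eventually)
qed

theorem proposition5:
  fixes x \<delta> lam \<epsilon> :: real
  assumes "\<delta> > 0" and "lam \<ge> 0" and "\<epsilon> > 0"
  shows "((\<lambda>n::nat. INF \<gamma>\<in>{lam - \<epsilon><..<lam + \<epsilon>} \<inter> {0..}.
            ereal (1 / real n) *
            eln (measure_pmf.prob (iid_poisson \<gamma> n)
                   {P. (\<Sum>i=1..n. real (P i)) / real n \<in> {x - \<delta><..<x + \<delta>}}))
          \<longlongrightarrow> (MIN \<gamma>\<in>{max 0 (lam - \<epsilon>), lam + \<epsilon>}.
                 - (INF a\<in>{x - \<delta><..<x + \<delta>}. ell \<gamma> a))) sequentially"
proof -
  let ?S = "{lam - \<epsilon><..<lam + \<epsilon>} \<inter> {0..}"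
  let ?a = "max 0 (lam - \<epsilon>)" and ?b = "lam + \<epsilon>"
  let ?R = "\<lambda>\<gamma>. - (INF a\<in>{x - \<delta><..<x + \<delta>}. ell \<gamma> a)"
  have lim: "(\<lambda>n. min (scaled_log_prob x \<delta> n ?a) (scaled_log_prob x \<delta> n ?b))
      \<longlonglongrightarrow> (MIN \<gamma>\<in>{?a, ?b}. ?R \<gamma>)"
    using tendsto_min[OF tendsto_scaled_log_prob[of ?a \<delta> x] tendsto_scaled_log_prob[of ?b \<delta> x]] assms
    by (cases "?a = ?b") auto
  have "(INF \<gamma>\<in>?S. ereal (1 / real n) * eln (measure_pmf.prob (iid_poisson \<gamma> n)
            {P. (\<Sum>i=1..n. real (P i)) / real n \<in> {x - \<delta><..<x + \<delta>}}))
      = min (scaled_log_prob x \<delta> n ?a) (scaled_log_prob x \<delta> n ?b)" if "n > 0" for n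
  proof -
    have "(INF \<gamma>\<in>?S. ereal (1 / real n) * eln (measure_pmf.prob (iid_poisson \<gamma> n)
            {P. (\<Sum>i=1..n. real (P i)) / real n \<in> {x - \<delta><..<x + \<delta>}}))
        = (INF \<gamma>\<in>?S. scaled_log_prob x \<delta> n \<gamma>)"
      unfolding scaled_log_prob_def
      by (intro INF_cong refl, subst prob_iid_poisson_mean_in_window[OF _ that]) auto
    then show ?thesis
      using INF_scaled_log_prob[OF that assms(2,3)] by simp
  qed
  then show ?thesis
    by (intro Lim_transform_eventually[OF lim] eventually_mono[OF eventually_gt_at_top[of "0::nat"]])
       simp
qed

end
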